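(* Let $N\ge 2$ and $d\ge 1$ be integers, $[N]=\{1,\dots,N\}$, and let $0\le\sigma\le\tau$. Let $\psi:[0,\infty)\to[0,\infty)$ be continuous, nonincreasing, with $\psi(s)>0$ for all $s\ge 0$ and $\sup_{s\ge0}\psi(s)\le 1$. Let $x_i^0\in C([-\tau,0],\mathbb{R}^d)$, $i\in[N]$, and let $\{x_i\}_{i\in[N]}$ be the global solution of \[ \dot x_i(t)=\sum_{j\ne i} a_{ij}(t)\big(x_j(t-\tau)-x_i(t-\sigma)\big),\quad t>0,\qquad a_{ij}(t)=\frac{1}{N-1}\psi\big(|x_i(t-\sigma)-x_j(t-\tau)|\big), \] with $x_i(t)=x_i^0(t)$ for $t\in[-\tau,0]$. Let $K$ be the smallest integer with $K\sigma\ge 2\tau$, i.e. $K=\lceil 2\tau/\sigma\rceil$. Assume there exists $\beta>0$ such that \[ 4\tau\le \beta\left(2e^{-2\tau}-1\right) \] and \[ 4\tau+\beta(1-e^{-2\tau})<\psi\Big(\big(1+\tau-\sigma+\beta^{-1}e^{2\tau}\big)\,\mathcal{Z}^K_\sigma\,\Delta^0_x\Big), \] where $\mathcal{Z}^K_\sigma:=Z^K_\sigma+Z^{K-1}_\sigma\,\beta\big(1-(1+2\tau)e^{-2\tau}\big)$. Then the solution reaches asymptotic consensus, i.e. $\lim_{t\to\infty}d_x(t)=0$, and the diameter $d_x(t)$ decays exponentially in time.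
   Context: $d_x(t):=\max_{i,j\in[N]}|x_i(t)-x_j(t)|$ for $t\ge 0$. $\Delta^0_x:=\max_{i,j\in[N]}\max_{s,t\in[-\tau,0]}|x_i^0(s)-x_j^0(t)|$. For $k\in\mathbb{N}\cup\{0\}$, \[ Z^k_\sigma:=\frac{1}{2\sqrt{\sigma(1+\sigma)}}\Big[\big((1+\sigma)+\sqrt{\sigma(1+\sigma)}\big)^{k+1}-\big((1+\sigma)-\sqrt{\sigma(1+\sigma)}\big)^{k+1}\Big], \] which is a polynomial in $\sigma$; equivalently $Z^0_\sigma=1$ and $Z^k_\sigma=1+(1+\sigma)Z^{k-1}_\sigma+\sigma\sum_{m=0}^{k-1}Z^m_\sigma$ for $k\ge1$. The global solution $x_i$ is continuous on $[-\tau,\infty)$ and continuously differentiable on $[0,\infty)$ (one-sided at $0$). "Decays exponentially" means there exist constants $A,\Gamma>0$ with $d_x(t)\le Ae^{-\Gamma t}$ for all $t\ge 0$. *)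

theory Defs
  imports "HOL-Analysis.Analysis"
begin

function Zs :: "real \<Rightarrow> nat \<Rightarrow> real" where
  "Zs \<sigma> k = (if k = 0 then 1
     else 1 + (1 + \<sigma>) * Zs \<sigma> (k - 1) + \<sigma> * (\<Sum>m<k. Zs \<sigma> m))"
  by auto
termination by (relation "Wellfounded.measure snd") auto

definition diam :: "nat \<Rightarrow> (nat \<Rightarrow> real \<Rightarrow> real^'d) \<Rightarrow> real \<Rightarrow> real" where
  "diam N x t = Max {norm (x i t - x j t) | i j. i < N \<and> j < N}"

definition Delta0 :: "nat \<Rightarrow> real \<Rightarrow> (nat \<Rightarrow> real \<Rightarrow> real^'d) \<Rightarrow> real" where
  "Delta0 N \<tau> x = Sup {norm (x i s - x j t) | i j s t.
      i < N \<and> j < N \<and> s \<in> {-\<tau>..0} \<and> t \<in> {-\<tau>..0}}"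

end

theory Submission
  imports Defs "HOL-Real_Asymp.Real_Asymp"
begin

text \<open>
  The diameter is trapped below the envelope \<open>env t = B * exp (- \<gamma> * t)\<close> by continuous
  induction, together with the speed bound \<open>c * env t\<close>. At the first time \<open>t\<^sub>0\<close> where
  one of the two bounds fails, every agent has moved at most \<open>\<tau> * c * env (t\<^sub>0 - \<tau>)\<close>
  within one delay window, so all delayed distances are at most \<open>(1 + \<tau> * c) * env (t\<^sub>0 - \<tau>)\<close>.
  This bounds the speeds, which therefore cannot be the bound that failed, and it bounds every
  interaction weight from below by \<open>P \<le> \<psi> ((1 + \<tau> * c) * B)\<close>. If \<open>t\<^sub>0 \<le> \<tau>\<close>, the
  diameter at \<open>t\<^sub>0\<close> is at most the initial diameter plus two displacements. If \<open>t\<^sub>0 > \<tau>\<close>,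
  projecting the velocities of a diametral pair onto their difference shows that the diameter
  \<open>D\<close> shrinks at rate at least \<open>P * D - 4 * \<tau> * c * env (t\<^sub>0 - \<tau>)\<close>, faster than the envelope.

  The hypotheses of the theorem are only used through \<open>4 * \<tau> < \<psi> R * (1 - 2 * \<tau>)\<close> and
  \<open>3 * \<Delta>\<^sup>0 \<le> R\<close> for the radius \<open>R\<close> inside \<open>\<psi>\<close>; the latter only needs \<open>K \<ge> 2\<close>, not the
  minimality of \<open>K\<close>. They leave room for \<open>c = 1 / (1 - 2 * \<tau>)\<close> and then for \<open>B\<close> and a
  small \<open>\<gamma>\<close>.
\<close>

lemma differentiable_bound_open_interval:
  fixes f :: "real \<Rightarrow> 'a::real_normed_vector"
  assumes "a \<le> b" and "continuous_on {a..b} f"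
    and "\<And>s. a < s \<Longrightarrow> s < b \<Longrightarrow> (f has_vector_derivative f' s) (at s)"
    and "\<And>s. a < s \<Longrightarrow> s < b \<Longrightarrow> norm (f' s) \<le> M"
  shows "norm (f b - f a) \<le> M * (b - a)"
proof (cases "a = b")
  case False
  with assms have "norm (f b - f a) \<le> M * b - M * a"
    by (intro differentiable_bound_general[where \<phi>="\<lambda>s. M * s" and \<phi>'="\<lambda>_. M"])
       (auto intro!: derivative_eq_intros continuous_intros)
  then show ?thesis by (simp add: algebra_simps)
qed simp

lemma nonneg_continuous_induction:
  fixes P :: "real \<Rightarrow> bool"
  assumes closed: "closed {t. 0 \<le> t \<and> \<not> P t}"
    and step: "\<And>t. 0 \<le> t \<Longrightarrow> (\<And>s. 0 \<le> s \<Longrightarrow> s < t \<Longrightarrow> P s) \<Longrightarrow> P t"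
    and "0 \<le> t"
  shows "P t"
proof (rule ccontr)
  let ?S = "{t. 0 \<le> t \<and> \<not> P t}"
  assume "\<not> P t"
  with \<open>0 \<le> t\<close> have "?S \<noteq> {}" by blast
  moreover have bdd: "bdd_below ?S" by (rule bdd_belowI[of _ 0]) auto
  ultimately have first: "Inf ?S \<in> ?S" using closed by (rule closed_contains_Inf)
  have "P s" if "0 \<le> s" "s < Inf ?S" for s
    using cInf_lower[OF _ bdd, of s] that by fastforce
  with first step show False by blast
qed

section \<open>The constants of the smallness hypothesis\<close>

declare Zs.simps[simp del]

lemma Zs_ge: "0 \<le> \<sigma> \<Longrightarrow> real k + 1 \<le> Zs \<sigma> k"
proof (induction k rule: less_induct)
  case (less k)
  show ?case
  proof (cases "k = 0")
    case False
    have "0 \<le> Zs \<sigma> m" if "m < k" for m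
      using less.IH[OF that less.prems] by linarith
    then have "0 \<le> \<sigma> * Zs \<sigma> (k - 1) + \<sigma> * (\<Sum>m<k. Zs \<sigma> m)"
      using False less.prems by (intro add_nonneg_nonneg mult_nonneg_nonneg sum_nonneg) auto
    moreover have "real k \<le> Zs \<sigma> (k - 1)"
      using less.IH[of "k - 1"] less.prems False by (simp add: of_nat_diff)
    moreover have "Zs \<sigma> k = 1 + (1 + \<sigma>) * Zs \<sigma> (k - 1) + \<sigma> * (\<Sum>m<k. Zs \<sigma> m)"
      using False by (subst Zs.simps) simp
    ultimately show ?thesis by (simp add: algebra_simps)
  qed (simp add: Zs.simps)
qed

lemma one_plus_mult_exp_neg_le: "(1 + a) * exp (- a) \<le> (1::real)"
proof -
  have "(1 + a) * exp (- a) \<le> exp a * exp (- a)"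
    by (intro mult_right_mono exp_ge_add_one_self) simp
  then show ?thesis by (simp flip: exp_add)
qed

definition consensus_radius :: "real \<Rightarrow> real \<Rightarrow> real \<Rightarrow> nat \<Rightarrow> real \<Rightarrow> real" where
  "consensus_radius \<sigma> \<tau> \<beta> K \<Delta> = (1 + \<tau> - \<sigma> + exp (2 * \<tau>) / \<beta>)
     * (Zs \<sigma> K + Zs \<sigma> (K - 1) * \<beta> * (1 - (1 + 2 * \<tau>) * exp (-2 * \<tau>))) * \<Delta>"

lemma consensus_radius_ge:
  assumes "0 \<le> \<sigma>" "\<sigma> \<le> \<tau>" "0 < \<beta>" "0 \<le> \<Delta>"
  shows "(real K + 1) * \<Delta> \<le> consensus_radius \<sigma> \<tau> \<beta> K \<Delta>"
proof -
  let ?Z = "Zs \<sigma> K + Zs \<sigma> (K - 1) * \<beta> * (1 - (1 + 2 * \<tau>) * exp (-2 * \<tau>))"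
  have "0 \<le> Zs \<sigma> (K - 1) * \<beta> * (1 - (1 + 2 * \<tau>) * exp (-2 * \<tau>))"
    using Zs_ge[OF \<open>0 \<le> \<sigma>\<close>, of "K - 1"] one_plus_mult_exp_neg_le[of "2 * \<tau>"] \<open>0 < \<beta>\<close>
    by simp
  then have Z: "real K + 1 \<le> ?Z"
    using Zs_ge[OF \<open>0 \<le> \<sigma>\<close>, of K] by linarith
  have "0 < exp (2 * \<tau>) / \<beta>" using \<open>0 < \<beta>\<close> by simp
  then have "1 \<le> 1 + \<tau> - \<sigma> + exp (2 * \<tau>) / \<beta>" using \<open>\<sigma> \<le> \<tau>\<close> by linarith
  moreover have "0 \<le> ?Z" using Z by linarith
  ultimately have "?Z \<le> (1 + \<tau> - \<sigma> + exp (2 * \<tau>) / \<beta>) * ?Z"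
    using mult_right_mono[of 1 _ ?Z] by simp
  with Z have "real K + 1 \<le> (1 + \<tau> - \<sigma> + exp (2 * \<tau>) / \<beta>) * ?Z"
    by linarith
  then show ?thesis
    unfolding consensus_radius_def using \<open>0 \<le> \<Delta>\<close> by (intro mult_right_mono) simp_all
qed

lemma consensus_radius_bounds:
  assumes "0 \<le> \<sigma>" "\<sigma> \<le> \<tau>" "0 < \<beta>" "0 \<le> \<Delta>" "2 * \<tau> \<le> real K * \<sigma>"
  shows "\<Delta> \<le> consensus_radius \<sigma> \<tau> \<beta> K \<Delta>"
    and "0 < \<tau> \<Longrightarrow> 3 * \<Delta> \<le> consensus_radius \<sigma> \<tau> \<beta> K \<Delta>"
proof -
  have "1 * \<Delta> \<le> (real K + 1) * \<Delta>"
    using \<open>0 \<le> \<Delta>\<close> by (intro mult_right_mono) simp_all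
  with consensus_radius_ge[OF assms(1-4), of K] show "\<Delta> \<le> consensus_radius \<sigma> \<tau> \<beta> K \<Delta>"
    by linarith
  assume "0 < \<tau>"
  have "2 \<le> K"
  proof (rule ccontr)
    assume "\<not> 2 \<le> K"
    then have "real K * \<sigma> \<le> 1 * \<sigma>" using \<open>0 \<le> \<sigma>\<close> by (intro mult_right_mono) auto
    with assms(2,5) \<open>0 < \<tau>\<close> show False by simp
  qed
  then have "3 * \<Delta> \<le> (real K + 1) * \<Delta>"
    using \<open>0 \<le> \<Delta>\<close> by (intro mult_right_mono) simp_all
  with consensus_radius_ge[OF assms(1-4), of K] show "3 * \<Delta> \<le> consensus_radius \<sigma> \<tau> \<beta> K \<Delta>"
    by linarith
qed

lemma small_delay_margin:
  fixes \<tau> \<beta> P :: real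
  assumes "0 \<le> \<tau>" "0 < \<beta>"
    and h1: "4 * \<tau> \<le> \<beta> * (2 * exp (-2 * \<tau>) - 1)"
    and h2: "4 * \<tau> + \<beta> * (1 - exp (-2 * \<tau>)) < P"
  shows "4 * \<tau> < P * (1 - 2 * \<tau>)"
proof -
  define u where "u = exp (-2 * \<tau>)"
  have u: "0 < u" "(1 + 2 * \<tau>) * u \<le> 1"
    using one_plus_mult_exp_neg_le[of "2 * \<tau>"] unfolding u_def by simp_all
  have "u \<le> (1 + 2 * \<tau>) * u" using u \<open>0 \<le> \<tau>\<close> by (simp add: algebra_simps)
  with u have "0 \<le> 1 - u" by linarith
  have q: "0 < 2 * u - 1"
  proof (cases "\<tau> = 0")
    case False
    then have "0 < \<beta> * (2 * u - 1)" using h1 \<open>0 \<le> \<tau>\<close> unfolding u_def by linarith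
    with \<open>0 < \<beta>\<close> show ?thesis by (simp add: zero_less_mult_iff)
  qed (simp add: u_def)
  have "0 \<le> \<beta> * (1 - u)" using \<open>0 < \<beta>\<close> \<open>0 \<le> 1 - u\<close> by simp
  then have "0 \<le> P" using h2 \<open>0 \<le> \<tau>\<close> unfolding u_def by linarith
  have "4 * \<tau> * u = 4 * \<tau> * (2 * u - 1) + 4 * \<tau> * (1 - u)"
    by (simp add: algebra_simps)
  also have "\<dots> \<le> 4 * \<tau> * (2 * u - 1) + \<beta> * (2 * u - 1) * (1 - u)"
    using h1 \<open>0 \<le> 1 - u\<close> unfolding u_def by (simp add: mult_right_mono)
  also have "\<dots> = (4 * \<tau> + \<beta> * (1 - u)) * (2 * u - 1)"
    by (simp add: algebra_simps)
  also have "\<dots> < P * (2 * u - 1)"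
    using h2 q unfolding u_def by (simp add: mult_strict_right_mono)
  also have "\<dots> \<le> P * (u * (1 - 2 * \<tau>))"
    using u \<open>0 \<le> P\<close> by (intro mult_left_mono) (simp_all add: algebra_simps)
  finally have "u * (4 * \<tau>) < u * (P * (1 - 2 * \<tau>))"
    by (simp add: algebra_simps)
  then show ?thesis using u by simp
qed

lemma exists_velocity_gain:
  fixes \<tau> P \<Delta> R :: real
  assumes "0 \<le> \<tau>" and margin: "4 * \<tau> < P * (1 - 2 * \<tau>)" and "0 \<le> P" "P \<le> 1"
    and "0 \<le> \<Delta>" "\<Delta> \<le> R" "0 < \<tau> \<Longrightarrow> 3 * \<Delta> \<le> R"
  obtains c where "0 < c" "1 + \<tau> * c < c" "4 * \<tau> * c < P" "2 * \<tau> * c < 1"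
    "\<Delta> * (1 + \<tau> * c) \<le> R * (1 - 2 * \<tau> * c)"
proof (cases "\<tau> = 0")
  case True
  then show ?thesis using margin assms by (intro that[of 2]) auto
next
  case False
  then have "0 < \<tau>" using assms by simp
  have "6 * \<tau> < 1"
  proof (cases "0 \<le> 1 - 2 * \<tau>")
    case True
    then have "P * (1 - 2 * \<tau>) \<le> 1 - 2 * \<tau>" using mult_right_mono[OF \<open>P \<le> 1\<close>] by simp
    then show ?thesis using margin by linarith
  next
    case False
    then have "P * (1 - 2 * \<tau>) \<le> 0" using \<open>0 \<le> P\<close> by (simp add: mult_nonneg_nonpos)
    then show ?thesis using margin \<open>0 < \<tau>\<close> by linarith
  qed
  define c where "c = 1 / (1 - 2 * \<tau>)"
  have d: "0 < 1 - 2 * \<tau>" using \<open>6 * \<tau> < 1\<close> \<open>0 < \<tau>\<close> by simp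
  have "0 \<le> \<Delta> * (2 - 11 * \<tau>)" using \<open>6 * \<tau> < 1\<close> \<open>0 \<le> \<Delta>\<close> by simp
  then have "\<Delta> * (1 - \<tau>) \<le> 3 * \<Delta> * (1 - 4 * \<tau>)" by (simp add: algebra_simps)
  also have "\<dots> \<le> R * (1 - 4 * \<tau>)"
    using assms(7) \<open>0 < \<tau>\<close> \<open>6 * \<tau> < 1\<close> by (intro mult_right_mono) auto
  finally have "\<Delta> * (1 - \<tau>) \<le> R * (1 - 4 * \<tau>)" .
  then have "\<Delta> * (1 - \<tau>) / (1 - 2 * \<tau>) \<le> R * (1 - 4 * \<tau>) / (1 - 2 * \<tau>)"
    using d by (intro divide_right_mono) auto
  moreover have "1 + \<tau> * c = (1 - \<tau>) / (1 - 2 * \<tau>)" "1 - 2 * \<tau> * c = (1 - 4 * \<tau>) / (1 - 2 * \<tau>)"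
    using d unfolding c_def by (simp_all add: field_simps)
  ultimately have "\<Delta> * (1 + \<tau> * c) \<le> R * (1 - 2 * \<tau> * c)" by simp
  moreover have "0 < c" "1 + \<tau> * c < c" "4 * \<tau> * c < P" "2 * \<tau> * c < 1"
    using d \<open>0 < \<tau>\<close> margin \<open>6 * \<tau> < 1\<close> unfolding c_def by (simp_all add: field_simps)
  ultimately show ?thesis by (rule that[rotated 4])
qed

lemma exists_decay_rate:
  fixes \<tau> c P B \<Delta> :: real
  assumes "1 + \<tau> * c < c" "4 * \<tau> * c < P" "\<Delta> < B * (1 - 2 * \<tau> * c)"
  obtains \<gamma> where "0 < \<gamma>" "(1 + \<tau> * c) * exp (\<gamma> * \<tau>) < c"
    "4 * \<tau> * c * exp (\<gamma> * \<tau>) + \<gamma> < P" "\<Delta> < B * (exp (- \<gamma> * \<tau>) - 2 * \<tau> * c)"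
proof -
  have "((\<lambda>\<gamma>. (1 + \<tau> * c) * exp (\<gamma> * \<tau>)) \<longlongrightarrow> (1 + \<tau> * c) * exp (0 * \<tau>)) (at_right 0)"
    "((\<lambda>\<gamma>. 4 * \<tau> * c * exp (\<gamma> * \<tau>) + \<gamma>) \<longlongrightarrow> 4 * \<tau> * c * exp (0 * \<tau>) + 0) (at_right 0)"
    "((\<lambda>\<gamma>. B * (exp (- \<gamma> * \<tau>) - 2 * \<tau> * c)) \<longlongrightarrow> B * (exp (- 0 * \<tau>) - 2 * \<tau> * c)) (at_right 0)"
    by (intro tendsto_intros)+
  moreover have "(1 + \<tau> * c) * exp (0 * \<tau>) < c" "4 * \<tau> * c * exp (0 * \<tau>) + 0 < P"
    "\<Delta> < B * (exp (- 0 * \<tau>) - 2 * \<tau> * c)"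
    using assms by simp_all
  ultimately have "\<forall>\<^sub>F \<gamma> in at_right 0. (1 + \<tau> * c) * exp (\<gamma> * \<tau>) < c"
    "\<forall>\<^sub>F \<gamma> in at_right 0. 4 * \<tau> * c * exp (\<gamma> * \<tau>) + \<gamma> < P"
    "\<forall>\<^sub>F \<gamma> in at_right 0. \<Delta> < B * (exp (- \<gamma> * \<tau>) - 2 * \<tau> * c)"
    by (simp_all only: order_tendstoD)
  with eventually_at_right_less[of "0::real"]
  have "\<forall>\<^sub>F \<gamma> in at_right 0. 0 < \<gamma> \<and> (1 + \<tau> * c) * exp (\<gamma> * \<tau>) < c
      \<and> 4 * \<tau> * c * exp (\<gamma> * \<tau>) + \<gamma> < P \<and> \<Delta> < B * (exp (- \<gamma> * \<tau>) - 2 * \<tau> * c)"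
    by eventually_elim auto
  then obtain \<gamma> where "0 < \<gamma>" "(1 + \<tau> * c) * exp (\<gamma> * \<tau>) < c"
    "4 * \<tau> * c * exp (\<gamma> * \<tau>) + \<gamma> < P" "\<Delta> < B * (exp (- \<gamma> * \<tau>) - 2 * \<tau> * c)"
    by (auto dest: eventually_happens)
  then show ?thesis by (rule that)
qed

lemma finite_diam_set:
  fixes x :: "nat \<Rightarrow> real \<Rightarrow> 'a::real_normed_vector"
  shows "finite {norm (x i t - x j t) | i j. i < N \<and> j < N}"
  by (rule finite_image_set2) (simp_all add: finite_Collect_less_nat)

lemma norm_le_diam: "i < N \<Longrightarrow> j < N \<Longrightarrow> norm (x i t - x j t) \<le> diam N x t"
  unfolding diam_def by (rule Max_ge[OF finite_diam_set]) blast

lemma diam_attained: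
  assumes "0 < N"
  obtains i j where "i < N" "j < N" "norm (x i t - x j t) = diam N x t"
proof -
  have "{norm (x i t - x j t) | i j. i < N \<and> j < N} \<noteq> {}" using assms by blast
  from Max_in[OF finite_diam_set[of x t N] this] obtain i j
    where "i < N" "j < N" "norm (x i t - x j t) = diam N x t"
    unfolding diam_def by auto
  then show ?thesis by (rule that)
qed

lemma inner_le_of_diam:
  fixes x :: "nat \<Rightarrow> real \<Rightarrow> real^'d"
  assumes "k < N" "p < N" and diam: "norm (x i t - x k t) = diam N x t"
  shows "(x i t - x k t) \<bullet> x p t \<le> (x i t - x k t) \<bullet> x i t"
proof -
  let ?w = "x i t - x k t"
  have "?w \<bullet> (x p t - x k t) \<le> norm ?w * norm (x p t - x k t)"
    by (rule norm_cauchy_schwarz)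
  also have "\<dots> \<le> norm ?w * norm ?w"
  proof (rule mult_left_mono)
    show "norm (x p t - x k t) \<le> norm ?w"
      using norm_le_diam[OF assms(2,1), of x t] diam by simp
  qed simp
  also have "\<dots> = ?w \<bullet> ?w" by (simp add: dot_square_norm power2_eq_square)
  finally show ?thesis by (simp add: inner_diff_right)
qed

lemma norm_le_Delta0:
  fixes x :: "nat \<Rightarrow> real \<Rightarrow> real^'d"
  assumes cont: "\<And>i. i < N \<Longrightarrow> continuous_on {-\<tau>..0} (x i)"
    and "i < N" "j < N" "s \<in> {-\<tau>..0}" "s' \<in> {-\<tau>..0}"
  shows "norm (x i s - x j s') \<le> Delta0 N \<tau> x"
proof -
  have "compact (\<Union>i<N. x i ` {-\<tau>..0})"
    using cont by (intro compact_UN compact_continuous_image) auto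
  then obtain M where M: "\<And>y. y \<in> (\<Union>i<N. x i ` {-\<tau>..0}) \<Longrightarrow> norm y \<le> M"
    using compact_imp_bounded bounded_iff by metis
  have bdd: "bdd_above {norm (x i s - x j t) | i j s t.
      i < N \<and> j < N \<and> s \<in> {-\<tau>..0} \<and> t \<in> {-\<tau>..0}}"
  proof (rule bdd_aboveI)
    fix z assume "z \<in> {norm (x i s - x j t) | i j s t.
      i < N \<and> j < N \<and> s \<in> {-\<tau>..0} \<and> t \<in> {-\<tau>..0}}"
    then obtain i j s t where z: "z = norm (x i s - x j t)" "i < N" "j < N"
      "s \<in> {-\<tau>..0}" "t \<in> {-\<tau>..0}"
      by blast
    have "norm (x i s) \<le> M" "norm (x j t) \<le> M"
      using z by (intro M; blast)+
    then show "z \<le> 2 * M" using z norm_triangle_ineq4[of "x i s" "x j t"] by simp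
  qed
  show ?thesis
    using assms(2-) unfolding Delta0_def by (intro cSup_upper[OF _ bdd]) blast
qed

section \<open>The delayed consensus system\<close>

definition velocity :: "nat \<Rightarrow> real \<Rightarrow> real \<Rightarrow> (real \<Rightarrow> real) \<Rightarrow> (nat \<Rightarrow> real \<Rightarrow> real^'d)
    \<Rightarrow> nat \<Rightarrow> real \<Rightarrow> real^'d" where
  "velocity N \<sigma> \<tau> \<psi> x i t = (\<Sum>j\<in>{..<N} - {i}.
     (\<psi> (norm (x i (t - \<sigma>) - x j (t - \<tau>))) / (real N - 1)) *\<^sub>R (x j (t - \<tau>) - x i (t - \<sigma>)))"

locale delay_consensus =
  fixes N :: nat and \<sigma> \<tau> :: real and \<psi> :: "real \<Rightarrow> real" and x :: "nat \<Rightarrow> real \<Rightarrow> real^'d"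
  assumes two_le_N: "2 \<le> N"
    and sigma_nonneg: "0 \<le> \<sigma>" and sigma_le_tau: "\<sigma> \<le> \<tau>"
    and psi_cont: "continuous_on {0..} \<psi>"
    and psi_antimono: "\<And>s t. 0 \<le> s \<Longrightarrow> s \<le> t \<Longrightarrow> \<psi> t \<le> \<psi> s"
    and psi_nonneg: "\<And>s. 0 \<le> s \<Longrightarrow> 0 \<le> \<psi> s"
    and psi_le_one: "\<And>s. 0 \<le> s \<Longrightarrow> \<psi> s \<le> 1"
    and x_cont: "\<And>i. i < N \<Longrightarrow> continuous_on {-\<tau>..} (x i)"
    and x_deriv: "\<And>i t. i < N \<Longrightarrow> 0 < t \<Longrightarrow>
      (x i has_vector_derivative velocity N \<sigma> \<tau> \<psi> x i t) (at t)"
begin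

abbreviation vel :: "nat \<Rightarrow> real \<Rightarrow> real^'d" where
  "vel \<equiv> velocity N \<sigma> \<tau> \<psi> x"

lemma tau_nonneg: "0 \<le> \<tau>"
  using sigma_nonneg sigma_le_tau by linarith

lemma agents_pos: "0 < N"
  using two_le_N by simp

lemma agents_minus_one_pos: "0 < real N - 1"
  using two_le_N by simp

lemma card_others: "i < N \<Longrightarrow> real (card ({..<N} - {i})) = real N - 1"
  by (simp add: card_Diff_singleton of_nat_diff)

lemma continuous_on_delayed:
  assumes "i < N" "0 \<le> a" "a \<le> \<tau>"
  shows "continuous_on {0..} (\<lambda>t. x i (t - a))"
  by (rule continuous_on_compose2[OF x_cont[OF assms(1)]])
     (use assms in \<open>auto intro!: continuous_intros\<close>)

lemma continuous_on_agent: "i < N \<Longrightarrow> continuous_on {0..} (x i)"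
  using tau_nonneg by (auto intro: continuous_on_subset[OF x_cont])

lemma continuous_on_vel:
  assumes "j < N"
  shows "continuous_on {0..} (vel j)"
proof -
  have "continuous_on {0..} (\<lambda>t. (\<psi> (norm (x j (t - \<sigma>) - x l (t - \<tau>))) / (real N - 1))
      *\<^sub>R (x l (t - \<tau>) - x j (t - \<sigma>)))" if "l < N" for l
  proof -
    have "continuous_on {0..} (\<lambda>t. x l (t - \<tau>))" "continuous_on {0..} (\<lambda>t. x j (t - \<sigma>))"
      using continuous_on_delayed \<open>l < N\<close> \<open>j < N\<close> sigma_nonneg sigma_le_tau tau_nonneg by auto
    moreover from calculation have "continuous_on {0..} (\<lambda>t. \<psi> (norm (x j (t - \<sigma>) - x l (t - \<tau>))))"
      by (intro continuous_on_compose2[OF psi_cont] continuous_intros) auto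
    ultimately show ?thesis using agents_minus_one_pos by (intro continuous_intros) auto
  qed
  then show ?thesis
    unfolding velocity_def by (intro continuous_on_sum) auto
qed

lemma norm_vel_le:
  assumes "j < N" "0 \<le> M" and bound: "\<And>l. l < N \<Longrightarrow> norm (x l (t - \<tau>) - x j (t - \<sigma>)) \<le> M"
  shows "norm (vel j t) \<le> M"
proof -
  have "norm (vel j t) \<le> (\<Sum>l\<in>{..<N} - {j}. norm ((\<psi> (norm (x j (t - \<sigma>) - x l (t - \<tau>))) / (real N - 1))
      *\<^sub>R (x l (t - \<tau>) - x j (t - \<sigma>))))"
    unfolding velocity_def by (rule norm_sum)
  also have "\<dots> \<le> (\<Sum>l\<in>{..<N} - {j}. M / (real N - 1))"
  proof (rule sum_mono)
    fix l assume "l \<in> {..<N} - {j}"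
    let ?p = "\<psi> (norm (x j (t - \<sigma>) - x l (t - \<tau>)))"
    have p: "0 \<le> ?p" "?p \<le> 1" using psi_nonneg psi_le_one by auto
    then have "?p * norm (x l (t - \<tau>) - x j (t - \<sigma>)) \<le> 1 * M"
      using bound[of l] \<open>l \<in> {..<N} - {j}\<close> \<open>0 \<le> M\<close> by (intro mult_mono) auto
    then show "norm ((?p / (real N - 1)) *\<^sub>R (x l (t - \<tau>) - x j (t - \<sigma>))) \<le> M / (real N - 1)"
      using p(1) agents_minus_one_pos by (simp add: divide_right_mono)
  qed
  also have "\<dots> = M" using \<open>j < N\<close> card_others agents_minus_one_pos by simp
  finally show ?thesis .
qed

lemma norm_history_le:
  assumes "i < N" "j < N" "s \<in> {-\<tau>..0}" "s' \<in> {-\<tau>..0}"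
  shows "norm (x i s - x j s') \<le> Delta0 N \<tau> x"
  using assms by (intro norm_le_Delta0) (auto intro: continuous_on_subset[OF x_cont])

lemma Delta0_nonneg: "0 \<le> Delta0 N \<tau> x"
  using norm_history_le[of 0 0 0 0] two_le_N tau_nonneg by simp

lemma inner_vel_le_of_extremal:
  assumes "i < N"
    and extremal: "\<And>p. p < N \<Longrightarrow> w \<bullet> x p t \<le> w \<bullet> x i t"
    and weight: "\<And>p. p < N \<Longrightarrow> P \<le> \<psi> (norm (x i (t - \<sigma>) - x p (t - \<tau>)))"
    and drift_tau: "\<And>p. p < N \<Longrightarrow> norm (x p t - x p (t - \<tau>)) \<le> \<delta>"
    and drift_sigma: "\<And>p. p < N \<Longrightarrow> norm (x p t - x p (t - \<sigma>)) \<le> \<delta>"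
  shows "w \<bullet> vel i t
    \<le> P / (real N - 1) * (\<Sum>p\<in>{..<N} - {i}. w \<bullet> x p t - w \<bullet> x i t) + 2 * norm w * \<delta>"
proof -
  let ?n = "real N - 1" and ?E = "2 * norm w * \<delta>"
  have "0 \<le> \<delta>" using drift_tau[OF \<open>i < N\<close>] by (meson norm_ge_zero order_trans)
  then have "0 \<le> ?E" by simp
  have inner_le: "w \<bullet> v \<le> norm w * \<delta>" if "norm v \<le> \<delta>" for v
    using norm_cauchy_schwarz[of w v] mult_left_mono[OF that norm_ge_zero[of w]] by linarith
  have summand: "\<psi> (norm (x i (t - \<sigma>) - x p (t - \<tau>))) / ?n * (w \<bullet> (x p (t - \<tau>) - x i (t - \<sigma>)))
      \<le> P / ?n * (w \<bullet> x p t - w \<bullet> x i t) + ?E / ?n" if "p < N" for p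
  proof -
    define a where "a = \<psi> (norm (x i (t - \<sigma>) - x p (t - \<tau>))) / ?n"
    have a: "P / ?n \<le> a" "a \<le> 1 / ?n"
      unfolding a_def using weight[OF \<open>p < N\<close>] psi_le_one agents_minus_one_pos
      by (simp_all add: divide_right_mono)
    have "0 \<le> a" unfolding a_def using psi_nonneg agents_minus_one_pos by simp
    have drift_back: "norm (x p (t - \<tau>) - x p t) \<le> \<delta>"
      using drift_tau[OF \<open>p < N\<close>] by (simp add: norm_minus_commute)
    have "w \<bullet> (x p (t - \<tau>) - x i (t - \<sigma>))
        = (w \<bullet> x p t - w \<bullet> x i t) + w \<bullet> (x p (t - \<tau>) - x p t) + w \<bullet> (x i t - x i (t - \<sigma>))"
      by (simp add: inner_diff_right)
    also have "\<dots> \<le> (w \<bullet> x p t - w \<bullet> x i t) + ?E"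
      using inner_le[OF drift_back] inner_le[OF drift_sigma[OF \<open>i < N\<close>]] by linarith
    finally have "a * (w \<bullet> (x p (t - \<tau>) - x i (t - \<sigma>))) \<le> a * ((w \<bullet> x p t - w \<bullet> x i t) + ?E)"
      using \<open>0 \<le> a\<close> by (rule mult_left_mono)
    also have "\<dots> = a * (w \<bullet> x p t - w \<bullet> x i t) + a * ?E"
      by (rule distrib_left)
    also have "\<dots> \<le> P / ?n * (w \<bullet> x p t - w \<bullet> x i t) + 1 / ?n * ?E"
      using mult_right_mono_neg[OF a(1), of "w \<bullet> x p t - w \<bullet> x i t"] extremal[OF \<open>p < N\<close>]
        mult_right_mono[OF a(2) \<open>0 \<le> ?E\<close>]
      by simp
    finally show ?thesis unfolding a_def by simp
  qed
  have "w \<bullet> vel i t = (\<Sum>p\<in>{..<N} - {i}.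
      \<psi> (norm (x i (t - \<sigma>) - x p (t - \<tau>))) / ?n * (w \<bullet> (x p (t - \<tau>) - x i (t - \<sigma>))))"
    by (simp add: velocity_def inner_sum_right)
  also have "\<dots> \<le> (\<Sum>p\<in>{..<N} - {i}. P / ?n * (w \<bullet> x p t - w \<bullet> x i t) + ?E / ?n)"
    using summand by (intro sum_mono) auto
  also have "\<dots> = P / ?n * (\<Sum>p\<in>{..<N} - {i}. w \<bullet> x p t - w \<bullet> x i t) + ?E"
    using card_others[OF \<open>i < N\<close>] agents_minus_one_pos by (simp add: sum.distrib sum_distrib_left)
  finally show ?thesis .
qed

lemma inner_vel_diff_le:
  assumes "i < N" "k < N" and diam: "norm (x i t - x k t) = diam N x t" and "0 \<le> P"
    and weight: "\<And>p q. p < N \<Longrightarrow> q < N \<Longrightarrow> P \<le> \<psi> (norm (x p (t - \<sigma>) - x q (t - \<tau>)))"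
    and drift_tau: "\<And>p. p < N \<Longrightarrow> norm (x p t - x p (t - \<tau>)) \<le> \<delta>"
    and drift_sigma: "\<And>p. p < N \<Longrightarrow> norm (x p t - x p (t - \<sigma>)) \<le> \<delta>"
  shows "(x i t - x k t) \<bullet> (vel i t - vel k t) \<le> diam N x t * (4 * \<delta> - P * diam N x t)"
proof -
  let ?w = "x i t - x k t" and ?D = "diam N x t" and ?n = "real N - 1"
  have diam': "norm (x k t - x i t) = ?D" using diam by (simp add: norm_minus_commute)
  have i: "?w \<bullet> vel i t \<le> P / ?n * (\<Sum>p\<in>{..<N} - {i}. ?w \<bullet> x p t - ?w \<bullet> x i t) + 2 * ?D * \<delta>"
    using inner_vel_le_of_extremal[OF \<open>i < N\<close> inner_le_of_diam[OF \<open>k < N\<close> _ diam]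
        weight[OF \<open>i < N\<close>] drift_tau drift_sigma] diam
    by simp
  have k: "(- ?w) \<bullet> vel k t \<le> P / ?n * (\<Sum>p\<in>{..<N} - {k}. (- ?w) \<bullet> x p t - (- ?w) \<bullet> x k t) + 2 * ?D * \<delta>"
    using inner_vel_le_of_extremal[OF \<open>k < N\<close> inner_le_of_diam[OF \<open>i < N\<close> _ diam']
        weight[OF \<open>k < N\<close>] drift_tau drift_sigma] diam'
    by (simp add: minus_diff_eq)
  have "(\<Sum>p\<in>{..<N} - {i}. ?w \<bullet> x p t - ?w \<bullet> x i t) + (\<Sum>p\<in>{..<N} - {k}. (- ?w) \<bullet> x p t - (- ?w) \<bullet> x k t)
      = (\<Sum>p<N. ?w \<bullet> x k t - ?w \<bullet> x i t)"
    using \<open>i < N\<close> \<open>k < N\<close> by (simp add: sum_diff1 sum.distrib[symmetric] algebra_simps)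
  also have "\<dots> = - real N * (?w \<bullet> ?w)"
    by (simp add: inner_diff_right inner_diff_left inner_commute algebra_simps)
  also have "?w \<bullet> ?w = ?D\<^sup>2"
    using diam by (simp flip: power2_norm_eq_inner)
  finally have sums: "P / ?n * ((\<Sum>p\<in>{..<N} - {i}. ?w \<bullet> x p t - ?w \<bullet> x i t)
      + (\<Sum>p\<in>{..<N} - {k}. (- ?w) \<bullet> x p t - (- ?w) \<bullet> x k t)) = - (P * real N / ?n) * ?D\<^sup>2"
    by simp
  have "P * 1 \<le> P * (real N / ?n)"
    using \<open>0 \<le> P\<close> agents_minus_one_pos by (intro mult_left_mono) (simp_all add: field_simps)
  then have "- (P * real N / ?n) * ?D\<^sup>2 \<le> - P * ?D\<^sup>2"
    by (intro mult_right_mono) auto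
  with i k sums show ?thesis
    by (simp add: inner_diff_right power2_eq_square algebra_simps distrib_left)
qed

end

section \<open>Exponential envelope\<close>

locale delay_consensus_envelope = delay_consensus +
  fixes B \<gamma> c P :: real
  assumes B_pos: "0 < B" and gamma_pos: "0 < \<gamma>" and c_pos: "0 < c"
    and gain: "(1 + \<tau> * c) * exp (\<gamma> * \<tau>) < c"
    and decay: "4 * \<tau> * c * exp (\<gamma> * \<tau>) + \<gamma> < P"
    and initial: "Delta0 N \<tau> x < B * (exp (- \<gamma> * \<tau>) - 2 * \<tau> * c)"
    and weight: "P \<le> \<psi> ((1 + \<tau> * c) * B)"
begin

definition env :: "real \<Rightarrow> real" where
  "env t = B * exp (- \<gamma> * t)"

lemma env_pos: "0 < env t"
  unfolding env_def using B_pos by simp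

lemma env_antimono: "s \<le> t \<Longrightarrow> env t \<le> env s"
  unfolding env_def using B_pos gamma_pos by simp

lemma env_delay: "env (t - a) = exp (\<gamma> * a) * env t"
  unfolding env_def by (simp add: algebra_simps flip: exp_add)

lemma env_zero: "env 0 = B"
  unfolding env_def by simp

lemma continuous_on_env: "continuous_on S env"
  unfolding env_def by (intro continuous_intros)

lemma P_pos: "0 < P"
proof -
  have "0 \<le> 4 * \<tau> * c * exp (\<gamma> * \<tau>)" using tau_nonneg c_pos by simp
  with decay gamma_pos show ?thesis by linarith
qed

lemma Delta0_lt_B: "Delta0 N \<tau> x < B"
proof -
  have "exp (- \<gamma> * \<tau>) \<le> 1" "0 \<le> \<tau> * c"
    using gamma_pos tau_nonneg c_pos by simp_all
  then have "exp (- \<gamma> * \<tau>) - 2 * \<tau> * c \<le> 1" by linarith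
  then have "B * (exp (- \<gamma> * \<tau>) - 2 * \<tau> * c) \<le> B * 1"
    using B_pos by (intro mult_left_mono) auto
  with initial show ?thesis by simp
qed

definition within_envelope :: "real \<Rightarrow> bool" where
  "within_envelope t \<longleftrightarrow>
     (\<forall>i<N. \<forall>k<N. norm (x i t - x k t) < env t) \<and> (\<forall>j<N. norm (vel j t) < c * env t)"

lemma closed_escape_set: "closed {t. 0 \<le> t \<and> \<not> within_envelope t}"
proof -
  have "{t. 0 \<le> t \<and> \<not> within_envelope t}
      = (\<Union>i<N. \<Union>k<N. {t \<in> {0..}. env t \<le> norm (x i t - x k t)})
        \<union> (\<Union>j<N. {t \<in> {0..}. c * env t \<le> norm (vel j t)})"
    unfolding within_envelope_def by (auto simp: not_less)
  moreover have "closed {t \<in> {0..}. env t \<le> norm (x i t - x k t)}" if "i < N" "k < N" for i k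
    by (intro continuous_on_closed_Collect_le continuous_intros continuous_on_env continuous_on_agent that)
  moreover have "closed {t \<in> {0..}. c * env t \<le> norm (vel j t)}" if "j < N" for j
    by (intro continuous_on_closed_Collect_le continuous_intros continuous_on_env continuous_on_vel that)
  ultimately show ?thesis by (auto intro!: closed_UN closed_Un)
qed

context
  fixes t0 :: real
  assumes t0_nonneg: "0 \<le> t0"
    and before: "\<And>s. 0 \<le> s \<Longrightarrow> s < t0 \<Longrightarrow> within_envelope s"
begin

lemma displacement_le:
  assumes "j < N" "0 \<le> r" "r \<le> r'" "r' \<le> t0"
  shows "norm (x j r' - x j r) \<le> c * env r * (r' - r)"
proof (rule differentiable_bound_open_interval[where f'="vel j"])
  show "continuous_on {r..r'} (x j)"
    by (rule continuous_on_subset[OF x_cont[OF \<open>j < N\<close>]]) (use tau_nonneg assms in auto)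
  show "(x j has_vector_derivative vel j s) (at s)" if "r < s" "s < r'" for s
    using x_deriv[OF \<open>j < N\<close>] that assms by auto
  show "norm (vel j s) \<le> c * env r" if "r < s" "s < r'" for s
  proof -
    have "norm (vel j s) < c * env s"
      using before[of s] that assms unfolding within_envelope_def by auto
    also have "\<dots> \<le> c * env r"
      using env_antimono[of r s] c_pos that by (intro mult_left_mono) auto
    finally show ?thesis by simp
  qed
qed (use assms in simp)

lemma delayed_distance_le:
  assumes "0 \<le> t" "t \<le> t0" "l < N" "j < N"
    and synchronous: "0 \<le> t - \<tau> \<Longrightarrow> norm (x l (t - \<tau>) - x j (t - \<tau>)) \<le> env (t - \<tau>)"
  shows "norm (x l (t - \<tau>) - x j (t - \<sigma>)) \<le> (1 + \<tau> * c) * env (t - \<tau>)"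
proof -
  have "0 \<le> \<tau> * c" using tau_nonneg c_pos by simp
  consider "0 \<le> t - \<tau>" | "t - \<tau> < 0" "0 \<le> t - \<sigma>" | "t - \<sigma> < 0" by linarith
  then show ?thesis
  proof cases
    case 1
    have "norm (x j (t - \<tau>) - x j (t - \<sigma>)) \<le> c * env (t - \<tau>) * (\<tau> - \<sigma>)"
      using displacement_le[of j "t - \<tau>" "t - \<sigma>"] assms 1 sigma_nonneg sigma_le_tau
      by (simp add: norm_minus_commute)
    also have "\<dots> \<le> c * env (t - \<tau>) * \<tau>"
      using less_imp_le[OF mult_pos_pos[OF c_pos env_pos]] sigma_nonneg by (intro mult_left_mono) auto
    finally have "norm (x l (t - \<tau>) - x j (t - \<sigma>)) \<le> env (t - \<tau>) + c * env (t - \<tau>) * \<tau>"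
      by (rule norm_diff_triangle_le[OF synchronous[OF 1]])
    then show ?thesis by (simp add: algebra_simps)
  next
    case 2
    have "norm (x j (t - \<sigma>) - x j 0) \<le> c * env 0 * (t - \<sigma>)"
      using displacement_le[of j 0 "t - \<sigma>"] assms 2 sigma_nonneg by simp
    also have "\<dots> \<le> c * B * \<tau>"
      unfolding env_zero using c_pos B_pos 2 sigma_nonneg by (intro mult_left_mono) auto
    finally have "norm (x l (t - \<tau>) - x j (t - \<sigma>)) \<le> Delta0 N \<tau> x + c * B * \<tau>"
      using norm_history_le[of l j "t - \<tau>" 0] assms 2 tau_nonneg
      by (intro norm_diff_triangle_le) (auto simp: norm_minus_commute)
    also have "\<dots> \<le> (1 + \<tau> * c) * B" using Delta0_lt_B by (simp add: algebra_simps)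
    also have "\<dots> \<le> (1 + \<tau> * c) * env (t - \<tau>)"
      using env_antimono[of "t - \<tau>" 0] env_zero 2 \<open>0 \<le> \<tau> * c\<close> by (intro mult_left_mono) auto
    finally show ?thesis .
  next
    case 3
    have "norm (x l (t - \<tau>) - x j (t - \<sigma>)) \<le> Delta0 N \<tau> x"
      using norm_history_le[of l j "t - \<tau>" "t - \<sigma>"] assms 3 sigma_le_tau by simp
    also have "\<dots> \<le> 1 * env (t - \<tau>)"
      using Delta0_lt_B env_antimono[of "t - \<tau>" 0] env_zero 3 sigma_le_tau by simp
    also have "\<dots> \<le> (1 + \<tau> * c) * env (t - \<tau>)"
      using env_pos[of "t - \<tau>"] \<open>0 \<le> \<tau> * c\<close> by (intro mult_right_mono) auto
    finally show ?thesis .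
  qed
qed

lemma norm_vel_lt_at:
  assumes "j < N" and diam: "\<And>i k. i < N \<Longrightarrow> k < N \<Longrightarrow> norm (x i t0 - x k t0) < env t0"
  shows "norm (vel j t0) < c * env t0"
proof -
  have "norm (vel j t0) \<le> (1 + \<tau> * c) * env (t0 - \<tau>)"
  proof (rule norm_vel_le[OF \<open>j < N\<close>])
    show "0 \<le> (1 + \<tau> * c) * env (t0 - \<tau>)"
      using tau_nonneg c_pos env_pos[of "t0 - \<tau>"] by (intro mult_nonneg_nonneg) simp_all
    fix l assume "l < N"
    show "norm (x l (t0 - \<tau>) - x j (t0 - \<sigma>)) \<le> (1 + \<tau> * c) * env (t0 - \<tau>)"
    proof (rule delayed_distance_le[OF t0_nonneg order_refl \<open>l < N\<close> \<open>j < N\<close>])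
      assume "0 \<le> t0 - \<tau>"
      show "norm (x l (t0 - \<tau>) - x j (t0 - \<tau>)) \<le> env (t0 - \<tau>)"
      proof (cases "\<tau> = 0")
        case True
        then show ?thesis using diam[of l j] \<open>l < N\<close> \<open>j < N\<close> by simp
      next
        case False
        then have "within_envelope (t0 - \<tau>)"
          using before \<open>0 \<le> t0 - \<tau>\<close> tau_nonneg by simp
        then show ?thesis
          using \<open>l < N\<close> \<open>j < N\<close> unfolding within_envelope_def by (blast intro: less_imp_le)
      qed
    qed
  qed
  also have "\<dots> < c * env t0"
    using gain env_pos[of t0] unfolding env_delay by (simp add: mult.assoc[symmetric])
  finally show ?thesis .
qed

lemma diam_lt_env_early:
  assumes "t0 \<le> \<tau>"
  shows "diam N x t0 < env t0"
proof -
  obtain i k where "i < N" "k < N" and ik: "norm (x i t0 - x k t0) = diam N x t0"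
    by (rule diam_attained[OF agents_pos])
  have drift: "norm (x p t0 - x p 0) \<le> c * B * \<tau>" if "p < N" for p
  proof -
    have "norm (x p t0 - x p 0) \<le> c * env 0 * (t0 - 0)"
      using displacement_le[of p 0 t0] that t0_nonneg by simp
    also have "\<dots> \<le> c * B * \<tau>"
      unfolding env_zero using c_pos B_pos assms by (intro mult_left_mono) auto
    finally show ?thesis .
  qed
  have "norm (x i t0 - x k 0) \<le> c * B * \<tau> + Delta0 N \<tau> x"
    using drift[OF \<open>i < N\<close>] norm_history_le[of i k 0 0] \<open>i < N\<close> \<open>k < N\<close> tau_nonneg
    by (intro norm_diff_triangle_le) auto
  moreover have "norm (x k 0 - x k t0) \<le> c * B * \<tau>"
    using drift[OF \<open>k < N\<close>] by (simp add: norm_minus_commute)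
  ultimately have "norm (x i t0 - x k t0) \<le> c * B * \<tau> + Delta0 N \<tau> x + c * B * \<tau>"
    by (rule norm_diff_triangle_le)
  also have "\<dots> < B * exp (- \<gamma> * \<tau>)"
    using initial by (simp add: algebra_simps)
  also have "\<dots> \<le> env t0"
    using env_antimono[OF assms] unfolding env_def .
  finally show ?thesis using ik by simp
qed

lemma dist_le_env_upto:
  assumes "0 < t0" "0 \<le> s" "s \<le> t0" "l < N" "j < N"
  shows "norm (x l s - x j s) \<le> env s"
proof -
  have "closed {s \<in> {0..}. norm (x l s - x j s) \<le> env s}"
    using assms by (intro continuous_on_closed_Collect_le continuous_intros continuous_on_env continuous_on_agent)
      auto
  moreover have "{0..<t0} \<subseteq> {s \<in> {0..}. norm (x l s - x j s) \<le> env s}"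
    using before assms unfolding within_envelope_def by (auto intro: less_imp_le)
  ultimately have "closure {0..<t0} \<subseteq> {s \<in> {0..}. norm (x l s - x j s) \<le> env s}"
    by (rule closure_minimal[rotated])
  with assms show ?thesis by auto
qed

lemma dissipation_at:
  assumes "\<tau> < t0" "i < N" "k < N" and diam: "norm (x i t0 - x k t0) = diam N x t0"
    and escape: "env t0 \<le> diam N x t0"
  shows "(x i t0 - x k t0) \<bullet> (vel i t0 - vel k t0) + \<gamma> * diam N x t0 * env t0 < 0"
proof -
  let ?D = "diam N x t0" and ?\<delta> = "\<tau> * c * env (t0 - \<tau>)"
  have "0 \<le> t0 - \<sigma>" "0 \<le> t0 - \<tau>" using assms sigma_le_tau by auto
  have drift_tau: "norm (x p t0 - x p (t0 - \<tau>)) \<le> ?\<delta>" if "p < N" for p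
    using displacement_le[of p "t0 - \<tau>" t0] that \<open>0 \<le> t0 - \<tau>\<close> tau_nonneg by (simp add: algebra_simps)
  have drift_sigma: "norm (x p t0 - x p (t0 - \<sigma>)) \<le> ?\<delta>" if "p < N" for p
  proof -
    have "norm (x p t0 - x p (t0 - \<sigma>)) \<le> c * env (t0 - \<sigma>) * \<sigma>"
      using displacement_le[of p "t0 - \<sigma>" t0] that \<open>0 \<le> t0 - \<sigma>\<close> sigma_nonneg by simp
    also have "\<dots> \<le> c * env (t0 - \<tau>) * \<tau>"
      using c_pos env_pos env_antimono[of "t0 - \<tau>" "t0 - \<sigma>"] sigma_nonneg sigma_le_tau
      by (intro mult_mono mult_left_mono) (auto simp: less_imp_le)
    finally show ?thesis by (simp add: algebra_simps)
  qed
  have weight_at: "P \<le> \<psi> (norm (x p (t0 - \<sigma>) - x q (t0 - \<tau>)))" if "p < N" "q < N" for p q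
  proof -
    have "norm (x q (t0 - \<tau>) - x p (t0 - \<sigma>)) \<le> (1 + \<tau> * c) * env (t0 - \<tau>)"
      using assms that tau_nonneg
      by (intro delayed_distance_le dist_le_env_upto) auto
    also have "\<dots> \<le> (1 + \<tau> * c) * B"
      using env_antimono[of 0 "t0 - \<tau>"] env_zero \<open>0 \<le> t0 - \<tau>\<close> tau_nonneg c_pos
      by (intro mult_left_mono) auto
    finally have "norm (x p (t0 - \<sigma>) - x q (t0 - \<tau>)) \<le> (1 + \<tau> * c) * B"
      by (simp add: norm_minus_commute)
    with weight psi_antimono[OF norm_ge_zero this] show ?thesis by linarith
  qed
  have dissipation: "(x i t0 - x k t0) \<bullet> (vel i t0 - vel k t0) \<le> ?D * (4 * ?\<delta> - P * ?D)"
    using inner_vel_diff_le[OF \<open>i < N\<close> \<open>k < N\<close> diam less_imp_le[OF P_pos] weight_at drift_tau drift_sigma] .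
  have "P * env t0 \<le> P * ?D"
    using mult_left_mono[OF escape less_imp_le[OF P_pos]] .
  moreover have "(4 * \<tau> * c * exp (\<gamma> * \<tau>) + \<gamma> - P) * env t0 < 0"
    using decay env_pos[of t0] by (simp add: mult_neg_pos)
  ultimately have "4 * ?\<delta> - P * ?D + \<gamma> * env t0 < 0"
    by (simp add: env_delay algebra_simps)
  moreover have "0 < ?D" using escape env_pos[of t0] by linarith
  ultimately have "?D * (4 * ?\<delta> - P * ?D + \<gamma> * env t0) < 0"
    by (simp add: mult_pos_neg)
  with dissipation show ?thesis by (simp add: algebra_simps)
qed

lemma diam_lt_env_late:
  assumes "\<tau> < t0"
  shows "diam N x t0 < env t0"
proof (rule ccontr)
  assume "\<not> diam N x t0 < env t0"
  then have escape: "env t0 \<le> diam N x t0" by simp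
  obtain i k where "i < N" "k < N" and diam: "norm (x i t0 - x k t0) = diam N x t0"
    by (rule diam_attained[OF agents_pos])
  let ?w = "x i t0 - x k t0" and ?D = "diam N x t0"
  define G where "G s = ?w \<bullet> (x i s - x k s) - ?D * env s" for s
  have "0 < t0" using assms tau_nonneg by simp
  have "((\<lambda>s. x i s - x k s) has_vector_derivative vel i t0 - vel k t0) (at t0)"
    using x_deriv \<open>i < N\<close> \<open>k < N\<close> \<open>0 < t0\<close> by (intro has_vector_derivative_diff) auto
  then have "((\<lambda>s. ?w \<bullet> (x i s - x k s)) has_real_derivative ?w \<bullet> (vel i t0 - vel k t0)) (at t0)"
    unfolding has_real_derivative_iff_has_vector_derivative
    by (rule bounded_linear.has_vector_derivative[OF bounded_linear_inner_right])
  then have "(G has_real_derivative ?w \<bullet> (vel i t0 - vel k t0) + \<gamma> * ?D * env t0) (at t0)"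
    unfolding G_def env_def by (auto intro!: derivative_eq_intros)
  then obtain d where "0 < d" and decreasing: "\<And>h. 0 < h \<Longrightarrow> h < d \<Longrightarrow> G t0 < G (t0 - h)"
    using DERIV_neg_dec_left dissipation_at[OF assms \<open>i < N\<close> \<open>k < N\<close> diam escape] by blast
  define h where "h = min d t0 / 2"
  have h: "0 < h" "h < d" "h < t0" unfolding h_def using \<open>0 < d\<close> \<open>0 < t0\<close> by auto
  have "?w \<bullet> (x i (t0 - h) - x k (t0 - h)) \<le> ?D * norm (x i (t0 - h) - x k (t0 - h))"
    using norm_cauchy_schwarz[of ?w "x i (t0 - h) - x k (t0 - h)"] diam by simp
  also have "\<dots> < ?D * env (t0 - h)"
    using before[of "t0 - h"] h \<open>i < N\<close> \<open>k < N\<close> escape env_pos[of t0]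
    unfolding within_envelope_def by (intro mult_strict_left_mono) auto
  finally have "G (t0 - h) < 0" unfolding G_def by simp
  moreover have "G t0 = ?D * (?D - env t0)"
    unfolding G_def using diam by (simp add: power2_norm_eq_inner[symmetric] power2_eq_square algebra_simps)
  then have "0 \<le> G t0" using escape env_pos[of t0] by simp
  ultimately show False using decreasing[OF h(1,2)] by simp
qed

lemma within_envelope_at: "within_envelope t0"
proof -
  have "diam N x t0 < env t0"
    using diam_lt_env_early diam_lt_env_late by (cases "t0 \<le> \<tau>") auto
  then have "norm (x i t0 - x k t0) < env t0" if "i < N" "k < N" for i k
    using norm_le_diam[OF that] by (rule le_less_trans[rotated])
  with norm_vel_lt_at show ?thesis unfolding within_envelope_def by blast
qed

end

lemma within_envelope_nonneg: "0 \<le> t \<Longrightarrow> within_envelope t"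
  by (rule nonneg_continuous_induction[OF closed_escape_set within_envelope_at])

lemma diam_lt_env:
  assumes "0 \<le> t"
  shows "diam N x t < env t"
proof -
  obtain i k where "i < N" "k < N" and diam: "norm (x i t - x k t) = diam N x t"
    by (rule diam_attained[OF agents_pos])
  with within_envelope_nonneg[OF assms] have "norm (x i t - x k t) < env t"
    unfolding within_envelope_def by blast
  with diam show ?thesis by simp
qed

lemma diam_tendsto_zero: "(diam N x \<longlongrightarrow> 0) at_top"
proof (rule tendsto_sandwich[OF _ _ tendsto_const])
  show "\<forall>\<^sub>F t in at_top. 0 \<le> diam N x t"
    using norm_le_diam[OF agents_pos agents_pos, of x] by simp
  show "\<forall>\<^sub>F t in at_top. diam N x t \<le> env t"
    using diam_lt_env by (intro eventually_at_top_linorderI[of 0]) (simp add: less_imp_le)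
  show "(env \<longlongrightarrow> 0) at_top"
    unfolding env_def using gamma_pos by real_asymp
qed

end

context delay_consensus
begin

lemma exists_envelope:
  assumes "Delta0 N \<tau> x \<le> R" "0 < \<tau> \<Longrightarrow> 3 * Delta0 N \<tau> x \<le> R"
    and margin: "4 * \<tau> < \<psi> R * (1 - 2 * \<tau>)"
  obtains B \<gamma> c P where "delay_consensus_envelope N \<sigma> \<tau> \<psi> x B \<gamma> c P"
proof -
  let ?\<Delta> = "Delta0 N \<tau> x"
  have "0 \<le> R" using Delta0_nonneg assms(1) by linarith
  obtain c where c: "0 < c" "1 + \<tau> * c < c" "4 * \<tau> * c < \<psi> R" "2 * \<tau> * c < 1"
    "?\<Delta> * (1 + \<tau> * c) \<le> R * (1 - 2 * \<tau> * c)"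
    using exists_velocity_gain[OF tau_nonneg margin psi_nonneg[OF \<open>0 \<le> R\<close>] psi_le_one[OF \<open>0 \<le> R\<close>]
        Delta0_nonneg assms(1,2)] by blast
  have "(\<psi> \<longlongrightarrow> \<psi> R) (at_right R)"
    using psi_cont \<open>0 \<le> R\<close> unfolding continuous_on_def
    by (auto intro: tendsto_within_subset)
  from eventually_at_right_less order_tendstoD(1)[OF this c(3)]
  have "\<forall>\<^sub>F y in at_right R. R < y \<and> 4 * \<tau> * c < \<psi> y"
    by eventually_elim simp
  then obtain y where "R < y" and y: "4 * \<tau> * c < \<psi> y"
    by (auto dest: eventually_happens)
  define B where "B = y / (1 + \<tau> * c)"
  have "0 \<le> \<tau> * c" using tau_nonneg c(1) by simp
  then have B: "0 < B" "(1 + \<tau> * c) * B = y"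
    unfolding B_def using \<open>R < y\<close> \<open>0 \<le> R\<close> by simp_all
  have "?\<Delta> * (1 + \<tau> * c) \<le> R * (1 - 2 * \<tau> * c)" by (fact c(5))
  also have "\<dots> < y * (1 - 2 * \<tau> * c)"
    using \<open>R < y\<close> c(4) by (intro mult_strict_right_mono) auto
  also have "\<dots> = B * (1 - 2 * \<tau> * c) * (1 + \<tau> * c)"
    unfolding B(2)[symmetric] by (simp add: algebra_simps)
  finally have "?\<Delta> * (1 + \<tau> * c) < B * (1 - 2 * \<tau> * c) * (1 + \<tau> * c)" .
  then have "?\<Delta> < B * (1 - 2 * \<tau> * c)"
    using \<open>0 \<le> \<tau> * c\<close> by (simp add: mult_less_cancel_right)
  with c(2) y obtain \<gamma> where "0 < \<gamma>" "(1 + \<tau> * c) * exp (\<gamma> * \<tau>) < c"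
    "4 * \<tau> * c * exp (\<gamma> * \<tau>) + \<gamma> < \<psi> y" "?\<Delta> < B * (exp (- \<gamma> * \<tau>) - 2 * \<tau> * c)"
    by (rule exists_decay_rate)
  with B c(1) have "delay_consensus_envelope N \<sigma> \<tau> \<psi> x B \<gamma> c (\<psi> y)"
    by (intro delay_consensus_envelope.intro delay_consensus_axioms delay_consensus_envelope_axioms.intro)
      simp_all
  then show ?thesis by (rule that)
qed

end

theorem theorem1p1:
  fixes N K :: nat and \<sigma> \<tau> \<beta> :: real and \<psi> :: "real \<Rightarrow> real"
    and x :: "nat \<Rightarrow> real \<Rightarrow> real^'d"
  assumes N: "N \<ge> 2"
    and st: "0 \<le> \<sigma>" "\<sigma> \<le> \<tau>"
    and psi_cont: "continuous_on {0..} \<psi>"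
    and psi_mono: "\<And>s t. 0 \<le> s \<Longrightarrow> s \<le> t \<Longrightarrow> \<psi> t \<le> \<psi> s"
    and psi_pos: "\<And>s. 0 \<le> s \<Longrightarrow> \<psi> s > 0"
    and psi_le1: "\<And>s. 0 \<le> s \<Longrightarrow> \<psi> s \<le> 1"
    and x_cont: "\<And>i. i < N \<Longrightarrow> continuous_on {-\<tau>..} (x i)"
    and x_ode: "\<And>i t. i < N \<Longrightarrow> t > 0 \<Longrightarrow>
       (x i has_vector_derivative
          (\<Sum>j\<in>{..<N} - {i}.
             (\<psi> (norm (x i (t - \<sigma>) - x j (t - \<tau>))) / (real N - 1))
               *\<^sub>R (x j (t - \<tau>) - x i (t - \<sigma>)))) (at t)"
    and K: "real K * \<sigma> \<ge> 2 * \<tau>" "\<And>k. k < K \<Longrightarrow> real k * \<sigma> < 2 * \<tau>"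
    and beta: "\<beta> > 0"
    and h1: "4 * \<tau> \<le> \<beta> * (2 * exp (-2 * \<tau>) - 1)"
    and h2: "4 * \<tau> + \<beta> * (1 - exp (-2 * \<tau>)) <
       \<psi> ((1 + \<tau> - \<sigma> + exp (2 * \<tau>) / \<beta>)
           * (Zs \<sigma> K + Zs \<sigma> (K - 1) * \<beta> * (1 - (1 + 2 * \<tau>) * exp (-2 * \<tau>)))
           * Delta0 N \<tau> x)"
  shows "(diam N x \<longlongrightarrow> 0) at_top \<and>
         (\<exists>A \<Gamma>. A > 0 \<and> \<Gamma> > 0 \<and> (\<forall>t\<ge>0. diam N x t \<le> A * exp (- \<Gamma> * t)))"
proof -
  interpret delay_consensus N \<sigma> \<tau> \<psi> x
  proof
    show "0 \<le> \<psi> s" if "0 \<le> s" for s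
      using psi_pos[OF that] by simp
    show "(x i has_vector_derivative velocity N \<sigma> \<tau> \<psi> x i t) (at t)" if "i < N" "0 < t" for i t
      using x_ode[OF that] unfolding velocity_def .
  qed (fact assms)+
  define R where "R = consensus_radius \<sigma> \<tau> \<beta> K (Delta0 N \<tau> x)"
  have "Delta0 N \<tau> x \<le> R" "0 < \<tau> \<Longrightarrow> 3 * Delta0 N \<tau> x \<le> R"
    unfolding R_def using consensus_radius_bounds[OF st beta Delta0_nonneg K(1)] by simp_all
  moreover have "4 * \<tau> < \<psi> R * (1 - 2 * \<tau>)"
    using small_delay_margin[OF tau_nonneg beta h1] h2 unfolding R_def consensus_radius_def .
  ultimately obtain B \<gamma> c P where "delay_consensus_envelope N \<sigma> \<tau> \<psi> x B \<gamma> c P"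
    by (rule exists_envelope)
  then interpret delay_consensus_envelope N \<sigma> \<tau> \<psi> x B \<gamma> c P .
  have "\<forall>t\<ge>0. diam N x t \<le> B * exp (- \<gamma> * t)"
    using diam_lt_env unfolding env_def by (simp add: less_imp_le)
  with diam_tendsto_zero B_pos gamma_pos show ?thesis by blast
qed

end
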